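(* Let \[ SA_{425} = 2^9 \cdot 3^5 \cdot 5^3 \cdot 7^2 \cdot 11^2 \cdot 13^2 \cdot \prod_{17\le p \le 149} p, \qquad J_0 = 2^9 \cdot 3^5 \cdot 5^3 \cdot 7^2 \cdot 11^2 \cdot 13^2 \cdot 151 \cdot \prod_{17\le p \le 139} p, \] (products over primes), and let $N_{39}$ be the product of the first $39$ primes. The only integer $n$ in the open interval $(SA_{425}, N_{39})$ satisfying \[ \frac{\sigma(n)}{n} > 8.8272 \] is $n = J_0$.
   Context: $\sigma(n)$ is the sum of the positive divisors of $n$. A positive integer $N$ is superabundant if $\sigma(m)/m < \sigma(N)/N$ for all $0<m<N$; the number $SA_{425}$ given above is the $425$th superabundant number. *)

theory Defs
  imports Complex_Main "HOL-Computational_Algebra.Primes"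
begin

definition divisor_sigma :: "nat \<Rightarrow> nat" where
  "divisor_sigma n = (\<Sum>d\<in>{d. d dvd n \<and> 0 < d}. d)"

definition first_primes :: "nat \<Rightarrow> nat set" where
  "first_primes k = {p. prime p \<and> card {q. prime q \<and> q < p} < k}"

definition SA425 :: nat where
  "SA425 = 2^9 * 3^5 * 5^3 * 7^2 * 11^2 * 13^2 * (\<Prod>p\<in>{p. prime p \<and> 17 \<le> p \<and> p \<le> 149}. p)"

definition J0 :: nat where
  "J0 = 2^9 * 3^5 * 5^3 * 7^2 * 11^2 * 13^2 * 151 * (\<Prod>p\<in>{p. prime p \<and> 17 \<le> p \<and> p \<le> 139}. p)"

definition N39 :: nat where
  "N39 = (\<Prod>p\<in>first_primes 39. p)"

end

theory Submission
  imports Defs "HOL-Number_Theory.Eratosthenes"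
begin

text \<open>Write \<open>\<sigma>(n)/n\<close> as the product of the factors \<open>f\<^sub>p(a) = \<sigma>(p ^ a)/p ^ a\<close> over the prime
  powers \<open>p ^ a\<close> exactly dividing \<open>n\<close>. For weights \<open>1 \<le> w\<^sub>p \<le> p powr (1/757)\<close> the product of the
  \<open>w\<^sub>p ^ a\<close> is at most \<open>n powr (1/757) \<le> N39 powr (1/757) \<le> E = 1.22226349\<close> when \<open>n < N39\<close>;
  so if also \<open>\<sigma>(n)/n > 8.8272\<close>, the product of the weighted factors \<open>f\<^sub>p(a)/w\<^sub>p ^ a\<close> exceeds
  \<open>8.8272/E\<close>. Each weighted factor is at most its maximum \<open>M\<^sub>p\<close> over all exponents, while the
  product of the \<open>M\<^sub>p\<close> is at most \<open>8.8272/(\<theta> E)\<close> with \<open>\<theta> = 0.999406\<close>. Hence every weighted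
  factor exceeds \<open>\<theta> M\<^sub>p\<close>, which fixes the exponent of every prime except
  \<open>2, 3, 7, 17, 149, 151, 157\<close> and leaves 192 candidates; among them only \<open>J0\<close> lies in range.
  The logarithms behind the weights and the bound for \<open>N39\<close> are certified from a Taylor bound
  for \<open>ln 2\<close> through multiplicative relations between small primes.\<close>

section \<open>Abundancy of prime powers\<close>

lemma divisor_sigma_mult_coprime:
  assumes "coprime a b" "0 < a" "0 < b"
  shows "divisor_sigma (a * b) = divisor_sigma a * divisor_sigma b"
proof -
  let ?D = "\<lambda>n::nat. {d. d dvd n \<and> 0 < d}"
  have image: "?D (a * b) = (\<lambda>(x, y). x * y) ` (?D a \<times> ?D b)"
  proof
    show "?D (a * b) \<subseteq> (\<lambda>(x, y). x * y) ` (?D a \<times> ?D b)"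
    proof
      fix d assume "d \<in> ?D (a * b)"
      then obtain x y where "d = x * y" "x dvd a" "y dvd b" "0 < d"
        using division_decomp by blast
      then show "d \<in> (\<lambda>(x, y). x * y) ` (?D a \<times> ?D b)"
        by (auto intro!: image_eqI[of _ _ "(x, y)"])
    qed
  qed (auto intro: mult_dvd_mono)
  have "inj_on (\<lambda>(x, y). x * y) (?D a \<times> ?D b)"
  proof (rule inj_onI, clarsimp)
    fix x y x' y' :: nat
    assume "x dvd a" "y dvd b" "x' dvd a" "y' dvd b" "x * y = x' * y'" "0 < x"
    with assms(1) have "x dvd x'" "x' dvd x"
      by (metis coprime_commute coprime_divisors coprime_dvd_mult_left_iff dvd_triv_left)+
    then have "x = x'"
      by (rule dvd_antisym)
    then show "x = x' \<and> y = y'"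
      using \<open>x * y = x' * y'\<close> \<open>0 < x\<close> by simp
  qed
  then have "divisor_sigma (a * b) = (\<Sum>(x, y)\<in>?D a \<times> ?D b. x * y)"
    unfolding divisor_sigma_def image by (simp add: sum.reindex case_prod_unfold)
  also have "\<dots> = divisor_sigma a * divisor_sigma b"
    by (simp add: divisor_sigma_def sum_product sum.cartesian_product)
  finally show ?thesis .
qed

lemma divisor_sigma_prime_power:
  assumes "prime p"
  shows "divisor_sigma (p ^ k) = (\<Sum>i\<le>k. p ^ i)"
proof -
  have "{d. d dvd p ^ k \<and> 0 < d} = (\<lambda>i. p ^ i) ` {..k}"
    using assms by (auto simp: divides_primepow_nat prime_gt_0_nat)
  moreover have "inj_on (\<lambda>i. p ^ i) {..k}"
    using prime_gt_1_nat[OF assms] by (intro inj_onI) simp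
  ultimately show ?thesis
    by (simp add: divisor_sigma_def sum.reindex)
qed

lemma divisor_sigma_prod_prime_powers:
  assumes "finite P" "\<And>p. p \<in> P \<Longrightarrow> prime p"
  shows "divisor_sigma (\<Prod>p\<in>P. p ^ e p) = (\<Prod>p\<in>P. divisor_sigma (p ^ e p))"
  using assms
proof (induction P rule: finite_induct)
  case empty
  have "{d. d dvd (1::nat) \<and> 0 < d} = {1}" by auto
  then show ?case by (simp add: divisor_sigma_def)
next
  case (insert q P)
  then have "coprime q p" if "p \<in> P" for p
    using that by (intro primes_coprime) auto
  then have "coprime (q ^ e q) (\<Prod>p\<in>P. p ^ e p)"
    by (simp add: prod_coprime_right)
  moreover have "0 < (\<Prod>p\<in>P. p ^ e p)" "0 < q ^ e q"
    using insert.prems by (auto intro!: prod_pos simp: prime_gt_0_nat)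
  ultimately show ?case
    using insert by (simp add: divisor_sigma_mult_coprime)
qed

definition prime_power_abundancy :: "nat \<Rightarrow> nat \<Rightarrow> real" where
  "prime_power_abundancy p a = (\<Sum>i\<le>a. 1 / real p ^ i)"

lemma prime_power_abundancy_0 [simp]: "prime_power_abundancy p 0 = 1"
  by (simp add: prime_power_abundancy_def)

lemma prime_power_abundancy_Suc:
  "prime_power_abundancy p (Suc a) = prime_power_abundancy p a + 1 / real p ^ Suc a"
  by (simp add: prime_power_abundancy_def)

lemma prime_power_abundancy_numeral:
  "prime_power_abundancy p (numeral k) = prime_power_abundancy p (pred_numeral k) + 1 / real p ^ numeral k"
  by (simp add: numeral_eq_Suc prime_power_abundancy_Suc)

lemma prime_power_abundancy_eq:
  assumes "prime p"
  shows "real (divisor_sigma (p ^ a)) / real p ^ a = prime_power_abundancy p a"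
proof -
  have "real p > 0" using assms prime_gt_0_nat by simp
  have "real (divisor_sigma (p ^ a)) / real p ^ a = (\<Sum>i\<le>a. real p ^ i / real p ^ a)"
    by (simp add: divisor_sigma_prime_power[OF assms] sum_divide_distrib)
  also have "\<dots> = (\<Sum>i\<le>a. 1 / real p ^ (a - i))"
    by (rule sum.cong) (use \<open>real p > 0\<close> in \<open>auto simp: power_diff\<close>)
  also have "\<dots> = prime_power_abundancy p a"
    unfolding prime_power_abundancy_def
    by (rule sum.reindex_bij_witness[of _ "\<lambda>i. a - i" "\<lambda>i. a - i"]) auto
  finally show ?thesis .
qed

lemma abundancy_prod_prime_powers:
  assumes "finite P" "\<And>p. p \<in> P \<Longrightarrow> prime p"
  shows "real (divisor_sigma (\<Prod>p\<in>P. p ^ e p)) / real (\<Prod>p\<in>P. p ^ e p)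
           = (\<Prod>p\<in>P. prime_power_abundancy p (e p))"
proof -
  have "real (divisor_sigma (\<Prod>p\<in>P. p ^ e p)) / real (\<Prod>p\<in>P. p ^ e p)
      = (\<Prod>p\<in>P. real (divisor_sigma (p ^ e p)) / real (p ^ e p))"
    by (simp add: divisor_sigma_prod_prime_powers[OF assms] prod_dividef)
  also have "\<dots> = (\<Prod>p\<in>P. prime_power_abundancy p (e p))"
    using assms(2) by (simp add: prime_power_abundancy_eq)
  finally show ?thesis .
qed

lemma prime_power_abundancy_ge_1: "1 \<le> prime_power_abundancy p a"
  by (induction a) (simp_all add: prime_power_abundancy_def add_increasing2)

lemma prime_power_abundancy_le:
  assumes "2 \<le> p"
  shows "prime_power_abundancy p a \<le> real p / (real p - 1)"
proof -
  have "prime_power_abundancy p a = (\<Sum>i<Suc a. (1 / real p) ^ i)"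
    by (simp add: prime_power_abundancy_def power_one_over lessThan_Suc_atMost)
  also have "\<dots> = (1 - (1 / real p) ^ Suc a) / (1 - 1 / real p)"
    using assms by (subst geometric_sum) (simp_all add: field_split_simps)
  also have "\<dots> \<le> 1 / (1 - 1 / real p)"
    using assms by (intro divide_right_mono) simp_all
  also have "\<dots> = real p / (real p - 1)"
    using assms by (simp add: field_simps)
  finally show ?thesis .
qed

lemma factor_gt_if_prod_gt:
  fixes h M :: "'a \<Rightarrow> 'b::linordered_semidom"
  assumes "finite R" and bounds: "\<And>i. i \<in> R \<Longrightarrow> 0 \<le> h i \<and> h i \<le> M i"
    and "0 \<le> \<theta>" and prod_gt: "\<theta> * (\<Prod>i\<in>R. M i) < (\<Prod>i\<in>R. h i)" and "j \<in> R"
  shows "\<theta> * M j < h j"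
proof (rule ccontr)
  assume "\<not> \<theta> * M j < h j"
  then have "h j \<le> \<theta> * M j" by simp
  have "(\<Prod>i\<in>R. h i) = h j * (\<Prod>i\<in>R - {j}. h i)"
    using assms by (simp add: prod.remove)
  also have "\<dots> \<le> (\<theta> * M j) * (\<Prod>i\<in>R - {j}. M i)"
    using \<open>h j \<le> \<theta> * M j\<close> bounds \<open>0 \<le> \<theta>\<close> \<open>j \<in> R\<close>
    by (intro mult_mono prod_mono prod_nonneg) (auto intro: order_trans)
  also have "\<dots> = \<theta> * (\<Prod>i\<in>R. M i)"
    using assms by (simp add: prod.remove mult.assoc)
  finally show False using prod_gt by simp
qed

lemma prod_power_le_powr:
  fixes w x :: "'a \<Rightarrow> real"
  assumes "\<And>p. p \<in> P \<Longrightarrow> 0 < x p" and "\<And>p. p \<in> P \<Longrightarrow> 0 \<le> w p \<and> w p \<le> x p powr \<epsilon>"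
  shows "(\<Prod>p\<in>P. w p ^ e p) \<le> (\<Prod>p\<in>P. x p ^ e p) powr \<epsilon>"
proof -
  have "(\<Prod>p\<in>P. w p ^ e p) \<le> (\<Prod>p\<in>P. (x p powr \<epsilon>) ^ e p)"
    using assms(2) by (intro prod_mono) (simp add: power_mono)
  also have "\<dots> = (\<Prod>p\<in>P. x p ^ e p) powr \<epsilon>"
  proof -
    have "(x p powr \<epsilon>) ^ n = (x p ^ n) powr \<epsilon>" if "p \<in> P" for p n
      using assms(1)[OF that] by (simp add: powr_power powr_powr mult.commute flip: powr_realpow)
    then show ?thesis
      by (simp add: prod_powr_distrib)
  qed
  finally show ?thesis .
qed

lemma le_powr_if_le_quadratic:
  fixes w x y \<epsilon> :: real
  assumes "0 < x" "0 \<le> y" "y \<le> \<epsilon> * ln x" "w \<le> 1 + y + y\<^sup>2 / 2"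
  shows "w \<le> x powr \<epsilon>"
proof -
  have "w \<le> exp y"
    using assms(2,4) exp_lower_Taylor_quadratic[of y] by linarith
  also have "\<dots> \<le> x powr \<epsilon>"
    using assms(1,3) by (simp add: powr_def mult.commute)
  finally show ?thesis .
qed

lemma classification_by_cutoff:
  fixes f :: "nat \<Rightarrow> real" and c w M \<theta> :: real
  assumes "\<And>a. f a \<le> c" "1 \<le> w" "0 \<le> \<theta>" "\<theta> \<le> 1"
    and below_cutoff: "\<forall>a\<in>{..<K}. f a / w ^ a \<le> M \<and> (\<theta> * M < f a / w ^ a \<longrightarrow> a \<in> S)"
    and beyond_cutoff: "c / w ^ K \<le> \<theta> * M" "0 < c"
  shows "f a / w ^ a \<le> M \<and> (\<theta> * M < f a / w ^ a \<longrightarrow> a \<in> S)"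
proof (cases "a < K")
  case False
  have "0 < c / w ^ K"
    using assms(2,7) by simp
  then have "0 < \<theta> * M"
    using beyond_cutoff(1) by linarith
  with assms(3) have "0 < M"
    by (simp add: zero_less_mult_iff)
  with assms(3,4) have "\<theta> * M \<le> M"
    by (simp add: mult_left_le_one_le)
  have "f a / w ^ a \<le> c / w ^ a"
    using assms(1,2) by (simp add: divide_right_mono)
  also have "\<dots> \<le> c / w ^ K"
    using assms(2,7) False by (intro divide_left_mono power_increasing) simp_all
  finally show ?thesis
    using beyond_cutoff(1) \<open>\<theta> * M \<le> M\<close> by simp
qed (use below_cutoff in simp)

lemma exp_ge_partial_sum:
  fixes x :: real
  assumes "0 \<le> x"
  shows "(\<Sum>m<n. x ^ m / fact m) \<le> exp x"
proof -
  obtain t where "exp x = (\<Sum>m<n. x ^ m / fact m) + exp t / fact n * x ^ n"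
    using Maclaurin_exp_le by blast
  moreover have "0 \<le> exp t / fact n * x ^ n"
    using assms by simp
  ultimately show ?thesis by linarith
qed

lemma exp_le_partial_sum_div:
  fixes x :: real
  assumes "0 \<le> x" and "x ^ n / fact n < 1"
  shows "exp x \<le> (\<Sum>m<n. x ^ m / fact m) / (1 - x ^ n / fact n)"
proof -
  define S where "S = (\<Sum>m<n. x ^ m / fact m)"
  define r where "r = x ^ n / fact n"
  obtain t where t: "\<bar>t\<bar> \<le> \<bar>x\<bar>" and exp_x: "exp x = S + exp t / fact n * x ^ n"
    unfolding S_def using Maclaurin_exp_le by blast
  have "exp t / fact n * x ^ n \<le> exp x * r"
    using t assms(1) unfolding r_def by (simp add: divide_right_mono mult_right_mono)
  with exp_x have "exp x \<le> S + exp x * r"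
    by linarith
  then have "exp x * (1 - r) \<le> S"
    by (simp add: algebra_simps)
  with assms(2) show ?thesis
    unfolding S_def r_def by (simp add: le_divide_eq)
qed

section \<open>Logarithms of the primes up to 173\<close>

lemma prod_list_powers_pos:
  "\<forall>(p, e)\<in>set xs. 0 < (p::nat) \<Longrightarrow> 0 < (\<Prod>(p, e)\<leftarrow>xs. p ^ e)"
  by (induction xs) auto

lemma ln_prod_list_powers:
  assumes "\<forall>(p, e)\<in>set xs. 0 < p"
  shows "ln (real (\<Prod>(p, e)\<leftarrow>xs. p ^ e)) = (\<Sum>(p, e)\<leftarrow>xs. real e * ln (real p))"
  using assms
proof (induction xs)
  case (Cons x xs)
  moreover have "0 < (\<Prod>(p, e)\<leftarrow>xs. p ^ e)"
    using Cons.prems by (intro prod_list_powers_pos) simp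
  ultimately show ?case
    by (auto simp: ln_mult ln_realpow)
qed simp

text \<open>A relation \<open>q ^ k * \<Prod>dens = \<Prod>nums * y\<close> with \<open>y\<close> close to \<open>1\<close> gives
  \<open>k ln q = \<Sum>nums - \<Sum>dens + ln y\<close> (sums of \<open>e ln p\<close>), and \<open>1 - 1/y \<le> ln y \<le> y - 1\<close>.\<close>

definition ln_relation_ok ::
    "(nat \<Rightarrow> real) \<Rightarrow> (nat \<Rightarrow> real) \<Rightarrow> nat set \<Rightarrow> nat \<Rightarrow> nat \<times> (nat \<times> nat) list \<times> (nat \<times> nat) list \<Rightarrow> bool"
  where
  "ln_relation_ok lo hi P q r \<longleftrightarrow> (case r of (k, dens, nums) \<Rightarrow>
     let y = real (q ^ k * (\<Prod>(p, e)\<leftarrow>dens. p ^ e)) / real (\<Prod>(p, e)\<leftarrow>nums. p ^ e) in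
       0 < k \<and> 0 < q \<and> (\<forall>(p, e)\<in>set (dens @ nums). p \<in> P \<and> 0 < p \<and> p < q) \<and>
       real k * lo q \<le> (\<Sum>(p, e)\<leftarrow>nums. real e * lo p) - (\<Sum>(p, e)\<leftarrow>dens. real e * hi p) + (1 - 1 / y) \<and>
       (\<Sum>(p, e)\<leftarrow>nums. real e * hi p) - (\<Sum>(p, e)\<leftarrow>dens. real e * lo p) + (y - 1) \<le> real k * hi q)"

lemma ln_bounds_by_relation:
  assumes ok: "ln_relation_ok lo hi P q (k, dens, nums)"
    and known: "\<And>p. p \<in> P \<Longrightarrow> p < q \<Longrightarrow> lo p \<le> ln (real p) \<and> ln (real p) \<le> hi p"
  shows "lo q \<le> ln (real q) \<and> ln (real q) \<le> hi q"
proof -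
  define D where "D = (\<Prod>(p, e)\<leftarrow>dens. p ^ e)"
  define N where "N = (\<Prod>(p, e)\<leftarrow>nums. p ^ e)"
  define y where "y = real (q ^ k * D) / real N"
  have facts: "0 < k" "0 < q" "\<forall>(p, e)\<in>set (dens @ nums). p \<in> P \<and> 0 < p \<and> p < q"
    and lower: "real k * lo q \<le> (\<Sum>(p, e)\<leftarrow>nums. real e * lo p) - (\<Sum>(p, e)\<leftarrow>dens. real e * hi p) + (1 - 1 / y)"
    and upper: "(\<Sum>(p, e)\<leftarrow>nums. real e * hi p) - (\<Sum>(p, e)\<leftarrow>dens. real e * lo p) + (y - 1) \<le> real k * hi q"
    using ok by (simp_all add: ln_relation_ok_def Let_def y_def D_def N_def)
  have "0 < D" "0 < N"
    using facts(3) unfolding D_def N_def by (auto intro: prod_list_powers_pos)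
  then have "0 < y"
    using facts(2) by (simp add: y_def)
  have "ln (real D) = (\<Sum>(p, e)\<leftarrow>dens. real e * ln (real p))"
       "ln (real N) = (\<Sum>(p, e)\<leftarrow>nums. real e * ln (real p))"
    unfolding D_def N_def using facts(3) by (auto intro!: ln_prod_list_powers)
  then have ln_y: "ln y = real k * ln (real q) + (\<Sum>(p, e)\<leftarrow>dens. real e * ln (real p))
                      - (\<Sum>(p, e)\<leftarrow>nums. real e * ln (real p))"
    using \<open>0 < D\<close> \<open>0 < N\<close> facts(2) by (simp add: y_def ln_divide_pos ln_mult ln_realpow)
  have bounds_dens: "(\<Sum>(p, e)\<leftarrow>dens. real e * lo p) \<le> (\<Sum>(p, e)\<leftarrow>dens. real e * ln (real p))"
                    "(\<Sum>(p, e)\<leftarrow>dens. real e * ln (real p)) \<le> (\<Sum>(p, e)\<leftarrow>dens. real e * hi p)"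
    and bounds_nums: "(\<Sum>(p, e)\<leftarrow>nums. real e * lo p) \<le> (\<Sum>(p, e)\<leftarrow>nums. real e * ln (real p))"
                    "(\<Sum>(p, e)\<leftarrow>nums. real e * ln (real p)) \<le> (\<Sum>(p, e)\<leftarrow>nums. real e * hi p)"
    using facts(3) known by (auto intro!: sum_list_mono mult_left_mono)
  have "ln y \<le> y - 1"
    using \<open>0 < y\<close> by (rule ln_le_minus_one)
  moreover have "1 - 1 / y \<le> ln y"
    using ln_le_minus_one[of "1 / y"] \<open>0 < y\<close> by (simp add: ln_div)
  ultimately have "real k * lo q \<le> real k * ln (real q)" "real k * ln (real q) \<le> real k * hi q"
    using lower upper ln_y bounds_dens bounds_nums by linarith+
  then show ?thesis
    using facts(1) by simp
qed

lemma ln_bounds_by_relations: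
  assumes base: "lo b \<le> ln (real b) \<and> ln (real b) \<le> hi b"
    and relations: "\<forall>(q, r)\<in>R. ln_relation_ok lo hi (insert b (fst ` R)) q r"
    and "q \<in> insert b (fst ` R)"
  shows "lo q \<le> ln (real q) \<and> ln (real q) \<le> hi q"
  using assms(3)
proof (induction q rule: less_induct)
  case (less q)
  show ?case
  proof (cases "q = b")
    case False
    with less.prems obtain k dens nums where "(q, (k, dens, nums)) \<in> R"
      by force
    then have "ln_relation_ok lo hi (insert b (fst ` R)) q (k, dens, nums)"
      using relations by blast
    then show ?thesis
      using less.IH by (rule ln_bounds_by_relation)
  qed (use base in simp)
qed

lemma ln_2_bounds: "693147/1000000 \<le> ln (2::real) \<and> ln (2::real) \<le> 693148/1000000"
proof
  have "exp (693147/1000000::real)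
      \<le> (\<Sum>m<12. (693147/1000000::real) ^ m / fact m) / (1 - (693147/1000000) ^ 12 / fact 12)"
    by (rule exp_le_partial_sum_div) (simp_all add: fact_numeral power_divide)
  also have "\<dots> \<le> 2"
    by (simp add: lessThan_nat_numeral fact_numeral power_divide)
  finally show "693147/1000000 \<le> ln (2::real)"
    by (subst ln_ge_iff) simp_all
next
  have "(2::real) \<le> (\<Sum>m<10. (693148/1000000::real) ^ m / fact m)"
    by (simp add: lessThan_nat_numeral fact_numeral power_divide)
  also have "\<dots> \<le> exp (693148/1000000)"
    by (rule exp_ge_partial_sum) simp
  finally show "ln (2::real) \<le> 693148/1000000"
    using ln_le_cancel_iff[of 2 "exp (693148/1000000)"] by simp
qed

definition ln_table :: "(nat \<times> nat \<times> nat) list" where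
  "ln_table =
   [(2, 6931470, 6931480),
    (3, 10986041, 10986213),
    (5, 16094283, 16094436),
    (7, 19459055, 19459154),
    (11, 23978808, 23979056),
    (13, 25649423, 25649593),
    (17, 28332025, 28332224),
    (19, 29444309, 29444467),
    (23, 31354878, 31355007),
    (29, 33672892, 33673047),
    (31, 34339811, 34339947),
    (37, 36109071, 36109279),
    (41, 37135650, 37135815),
    (43, 37611893, 37612133),
    (47, 38501397, 38501575),
    (53, 39702836, 39703017),
    (59, 40775267, 40775477),
    (61, 41108645, 41108840),
    (67, 42046830, 42047019),
    (71, 42626734, 42626900),
    (73, 42904474, 42904724),
    (79, 43694389, 43694567),
    (83, 44188307, 44188529),
    (89, 44886275, 44886520),
    (97, 45747016, 45747232),
    (101, 46151059, 46151332),
    (103, 46347192, 46347404),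
    (107, 46728184, 46728417),
    (109, 46913367, 46913604),
    (113, 47273769, 47274009),
    (127, 48441758, 48441992),
    (131, 48751881, 48752085),
    (137, 49199691, 49199945),
    (139, 49344626, 49344871),
    (149, 50039357, 50039583),
    (151, 50172677, 50172931),
    (157, 50562337, 50562589),
    (163, 50937381, 50937651),
    (167, 51179820, 51180088),
    (173, 51532771, 51533061)]"

definition ln_relations :: "(nat \<times> nat \<times> (nat \<times> nat) list \<times> (nat \<times> nat) list) list" where
  "ln_relations =
   [(3, 12, [], [(2, 19)]),
    (5, 8, [], [(2, 17), (3, 1)]),
    (7, 10, [], [(2, 21), (3, 3), (5, 1)]),
    (11, 3, [(3, 1)], [(2, 5), (5, 3)]),
    (13, 3, [(5, 1)], [(2, 5), (7, 3)]),
    (17, 3, [], [(2, 2), (5, 2), (7, 2)]),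
    (19, 3, [], [(2, 2), (5, 1), (7, 3)]),
    (23, 3, [], [(2, 7), (5, 1), (19, 1)]),
    (29, 2, [(7, 1)], [(2, 8), (23, 1)]),
    (31, 3, [], [(2, 5), (7, 2), (19, 1)]),
    (37, 2, [], [(2, 2), (7, 3)]),
    (41, 2, [], [(2, 1), (29, 2)]),
    (43, 3, [], [(2, 7), (3, 3), (23, 1)]),
    (47, 2, [], [(2, 5), (3, 1), (23, 1)]),
    (53, 3, [], [(2, 1), (7, 4), (31, 1)]),
    (59, 3, [], [(2, 1), (5, 1), (19, 1), (23, 1), (47, 1)]),
    (61, 2, [], [(2, 2), (7, 2), (19, 1)]),
    (67, 3, [], [(2, 8), (5, 2), (47, 1)]),
    (71, 2, [(13, 1)], [(2, 16)]),
    (73, 2, [], [(2, 1), (5, 1), (13, 1), (41, 1)]),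
    (79, 3, [], [(2, 6), (5, 1), (23, 1), (67, 1)]),
    (83, 3, [], [(2, 2), (3, 1), (29, 1), (31, 1), (53, 1)]),
    (89, 1, [(23, 1)], [(2, 11)]),
    (97, 2, [], [(2, 6), (3, 1), (7, 2)]),
    (101, 3, [], [(5, 1), (17, 2), (23, 1), (31, 1)]),
    (103, 3, [], [(2, 3), (7, 1), (13, 1), (19, 1), (79, 1)]),
    (107, 3, [(3, 1)], [(2, 10), (37, 1), (97, 1)]),
    (109, 3, [], [(2, 6), (3, 1), (5, 1), (19, 1), (71, 1)]),
    (113, 2, [], [(2, 5), (3, 1), (7, 1), (19, 1)]),
    (127, 2, [], [(2, 2), (37, 1), (109, 1)]),
    (131, 2, [], [(2, 4), (29, 1), (37, 1)]),
    (137, 2, [], [(2, 2), (13, 1), (19, 2)]),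
    (139, 3, [], [(2, 3), (7, 2), (13, 1), (17, 1), (31, 1)]),
    (149, 3, [], [(2, 2), (7, 1), (31, 1), (37, 1), (103, 1)]),
    (151, 3, [], [(17, 1), (31, 1), (47, 1), (139, 1)]),
    (157, 3, [], [(2, 4), (5, 1), (13, 1), (61, 2)]),
    (163, 2, [], [(2, 2), (7, 1), (13, 1), (73, 1)]),
    (167, 2, [], [(2, 4), (3, 1), (7, 1), (83, 1)]),
    (173, 2, [], [(2, 1), (5, 1), (41, 1), (73, 1)])]"

definition ln_lo :: "nat \<Rightarrow> real" where
  "ln_lo p = real (fst (the (map_of ln_table p))) / 10^7"

definition ln_hi :: "nat \<Rightarrow> real" where
  "ln_hi p = real (snd (the (map_of ln_table p))) / 10^7"

text \<open>Table lookups are evaluated with this small rule set before the arithmetic is left to the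
  full simplifier: unfolding a table under the full simp set costs far more than the arithmetic.\<close>

lemmas table_lookup_simps =
  map_of_Cons_code numeral_eq_iff numeral_le_iff semiring_norm if_True if_False option.sel prod.sel
  prod.case list.map min_def

lemma ln_table_keys: "fst ` set ln_table = insert 2 (fst ` set ln_relations)"
  by (simp add: ln_table_def ln_relations_def)

lemma ln_relations_ok:
  "\<forall>(q, r)\<in>set ln_relations. ln_relation_ok ln_lo ln_hi (insert 2 (fst ` set ln_relations)) q r"
  unfolding ln_relations_def list.set ball_simps prod.case
  by (simp only: ln_relation_ok_def ln_lo_def ln_hi_def ln_table_def table_lookup_simps) simp

lemma ln_table_bounds:
  assumes "p \<in> fst ` set ln_table"
  shows "ln_lo p \<le> ln (real p) \<and> ln (real p) \<le> ln_hi p"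
proof (rule ln_bounds_by_relations[OF _ ln_relations_ok])
  show "ln_lo 2 \<le> ln (real 2) \<and> ln (real 2) \<le> ln_hi 2"
    using ln_2_bounds by (simp add: ln_lo_def ln_hi_def ln_table_def)
qed (use assms ln_table_keys in simp)

section \<open>Weights and admissible exponents\<close>

definition theta :: real where "theta = 0.999406"

lemma theta_nonneg: "0 \<le> theta" and theta_le_1: "theta \<le> 1"
  by (simp_all add: theta_def)

text \<open>A row \<open>(p, W, M, K, S)\<close> holds the weight \<open>W/10\<^sup>8\<close>, just below \<open>p powr (1/757)\<close>, and the
  maximum \<open>M/10\<^sup>8\<close> (rounded up) of the weighted abundancy of \<open>p\<close> over all exponents; these
  maxima leave almost no slack in \<open>weighted_abundancy_bound_product\<close>.\<close>

definition exponent_table :: "(nat \<times> nat \<times> nat \<times> nat \<times> nat list) list" where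
  "exponent_table =
   [(2, 100091606, 198164910, 11, [8, 9, 10]),
    (3, 100145231, 148711224, 7, [5, 6]),
    (5, 100212832, 124006537, 5, [3]),
    (7, 100257385, 115730021, 4, [2, 3]),
    (11, 100317262, 109223209, 3, [2]),
    (13, 100339403, 107552711, 3, [2]),
    (17, 100374967, 105486813, 3, [1, 2]),
    (19, 100389716, 104854524, 2, [1]),
    (23, 100415056, 103916515, 2, [1]),
    (29, 100445809, 102989142, 2, [1]),
    (31, 100454659, 102758606, 2, [1]),
    (37, 100478139, 102213978, 2, [1]),
    (41, 100491766, 101937730, 2, [1]),
    (43, 100498088, 101818436, 2, [1]),
    (47, 100509898, 101609555, 2, [1]),
    (53, 100525851, 101353823, 2, [1]),
    (59, 100540093, 101148619, 2, [1]),
    (61, 100544521, 101088895, 2, [1]),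
    (67, 100556982, 100930374, 2, [1]),
    (71, 100564686, 100839027, 2, [1]),
    (73, 100568375, 100796959, 2, [1]),
    (79, 100578870, 100683000, 2, [1]),
    (83, 100585432, 100615783, 2, [1]),
    (89, 100594707, 100525762, 2, [1]),
    (97, 100606145, 100422224, 2, [1]),
    (101, 100611515, 100376283, 2, [1]),
    (103, 100614122, 100354575, 2, [1]),
    (107, 100619186, 100313453, 2, [1]),
    (109, 100621647, 100293957, 2, [1]),
    (113, 100626438, 100256909, 2, [1]),
    (127, 100641965, 100144509, 2, [1]),
    (131, 100646088, 100116518, 2, [1]),
    (137, 100652041, 100077382, 2, [1]),
    (139, 100653968, 100065032, 2, [1]),
    (149, 100663206, 100007883, 2, [0, 1]),
    (151, 100664979, 100000000, 2, [0, 1]),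
    (157, 100670161, 100000000, 2, [0, 1]),
    (163, 100675148, 100000000, 2, [0]),
    (167, 100678372, 100000000, 1, [0]),
    (173, 100683067, 100000000, 1, [0])]"

definition exponent_data :: "nat \<Rightarrow> nat \<times> nat \<times> nat \<times> nat list" where
  "exponent_data p = the (map_of exponent_table (min p 173))"

definition weight :: "nat \<Rightarrow> real" where
  "weight p = (case exponent_data p of (w, _, _, _) \<Rightarrow> real w / 10^8)"

definition weighted_abundancy_bound :: "nat \<Rightarrow> real" where
  "weighted_abundancy_bound p = (case exponent_data p of (_, M, _, _) \<Rightarrow> real M / 10^8)"

definition exponent_cutoff :: "nat \<Rightarrow> nat" where
  "exponent_cutoff p = (case exponent_data p of (_, _, K, _) \<Rightarrow> K)"

definition admissible_exponents :: "nat \<Rightarrow> nat set" where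
  "admissible_exponents p = (case exponent_data p of (_, _, _, S) \<Rightarrow> set S)"

definition weighted_abundancy :: "nat \<Rightarrow> nat \<Rightarrow> real" where
  "weighted_abundancy p a = prime_power_abundancy p a / weight p ^ a"

definition exponent_data_ok :: "nat \<Rightarrow> bool" where
  "exponent_data_ok p \<longleftrightarrow>
     1 \<le> weight p \<and> weight p \<le> 1 + ln_lo p / 757 + (ln_lo p / 757)\<^sup>2 / 2 \<and>
     (\<forall>a\<in>{..<exponent_cutoff p}. weighted_abundancy p a \<le> weighted_abundancy_bound p \<and>
        (theta * weighted_abundancy_bound p < weighted_abundancy p a \<longrightarrow> a \<in> admissible_exponents p)) \<and>
     real p / (real p - 1) / weight p ^ exponent_cutoff p \<le> theta * weighted_abundancy_bound p"

lemma primes_upto_172: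
  "primes_upto 172 = [2, 3, 5, 7, 11, 13, 17, 19, 23, 29, 31, 37, 41, 43, 47, 53, 59, 61, 67, 71, 73,
                      79, 83, 89, 97, 101, 103, 107, 109, 113, 127, 131, 137, 139, 149, 151, 157, 163, 167]"
  by code_simp

lemma exponent_table_keys: "map fst exponent_table = primes_upto 172 @ [173]"
  by (simp add: exponent_table_def primes_upto_172)

lemma exponent_table_ok: "\<forall>p\<in>set (map fst exponent_table). exponent_data_ok p"
  unfolding exponent_table_keys primes_upto_172 append.simps list.set ball_simps
  by (simp only: exponent_data_ok_def weighted_abundancy_def weight_def weighted_abundancy_bound_def
        exponent_cutoff_def admissible_exponents_def exponent_data_def ln_lo_def exponent_table_def
        ln_table_def table_lookup_simps)
     (simp add: theta_def lessThan_nat_numeral prime_power_abundancy_numeral prime_power_abundancy_Suc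
        power_divide)

lemma exponent_data_min: "exponent_data (min p 173) = exponent_data p"
  by (simp add: exponent_data_def)

lemma exponent_data_large:
  assumes "173 \<le> p"
  shows "exponent_data p = (100683067, 100000000, 1, [0])"
proof -
  have "min p 173 = 173"
    using assms by simp
  then show ?thesis
    by (simp add: exponent_data_def exponent_table_def)
qed

lemma min_173_in_table:
  assumes "prime p"
  shows "min p 173 \<in> set (map fst exponent_table)"
proof (cases "p \<le> 172")
  case True
  then show ?thesis
    using assms by (simp add: exponent_table_keys set_primes_upto)
qed (simp add: exponent_table_keys)

lemma exponent_table_in_ln_table: "set (map fst exponent_table) \<subseteq> fst ` set ln_table"
  by (simp add: exponent_table_def ln_table_def)

lemma weight_bounds:
  assumes "prime p"
  shows "1 \<le> weight p" "weight p \<le> real p powr (1 / 757)"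
proof -
  define q where "q = min p 173"
  have "exponent_data_ok q" "q \<in> fst ` set ln_table"
    using min_173_in_table[OF assms] exponent_table_ok exponent_table_in_ln_table
    unfolding q_def by auto
  moreover have "weight q = weight p"
    unfolding q_def weight_def exponent_data_min ..
  ultimately have w: "1 \<le> weight p" "weight p \<le> 1 + ln_lo q / 757 + (ln_lo q / 757)\<^sup>2 / 2"
    and "ln_lo q \<le> ln (real q)"
    using ln_table_bounds by (auto simp: exponent_data_ok_def)
  moreover have "ln (real q) \<le> ln (real p)"
    using assms prime_gt_0_nat[OF assms] by (simp add: q_def)
  moreover have "0 \<le> ln_lo q"
    by (simp add: ln_lo_def)
  ultimately show "1 \<le> weight p" "weight p \<le> real p powr (1 / 757)"
    using prime_gt_0_nat[OF assms] by (auto intro!: le_powr_if_le_quadratic[where y = "ln_lo q / 757"])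
qed

lemma weight_pos: "prime p \<Longrightarrow> 0 < weight p"
  using weight_bounds(1)[of p] by simp

lemma weighted_abundancy_pos: "prime p \<Longrightarrow> 0 < weighted_abundancy p a"
  using weight_pos[of p] prime_power_abundancy_ge_1[of p a]
  by (simp add: weighted_abundancy_def)

lemma weighted_abundancy_classified:
  assumes "prime p"
  shows "weighted_abundancy p a \<le> weighted_abundancy_bound p \<and>
         (theta * weighted_abundancy_bound p < weighted_abundancy p a \<longrightarrow> a \<in> admissible_exponents p)"
proof -
  define q where "q = min p 173"
  have "2 \<le> q" "q \<le> p"
    using prime_ge_2_nat[OF assms] by (auto simp: q_def)
  have ok: "exponent_data_ok q"
    using min_173_in_table[OF assms] exponent_table_ok unfolding q_def by auto
  have data: "weight q = weight p" "weighted_abundancy_bound q = weighted_abundancy_bound p"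
      "exponent_cutoff q = exponent_cutoff p" "admissible_exponents q = admissible_exponents p"
    unfolding q_def weight_def weighted_abundancy_bound_def exponent_cutoff_def admissible_exponents_def
      exponent_data_min by simp_all
  have same_below_cutoff: "prime_power_abundancy p a = prime_power_abundancy q a"
    if "a < exponent_cutoff p" for a
  proof (cases "p \<le> 173")
    case False
    then have "exponent_cutoff p = 1"
      by (simp add: exponent_cutoff_def exponent_data_large)
    with that show ?thesis by simp
  qed (simp add: q_def)
  have "prime_power_abundancy p a \<le> real q / (real q - 1)" for a
  proof -
    have "prime_power_abundancy p a \<le> real p / (real p - 1)"
      using \<open>2 \<le> q\<close> \<open>q \<le> p\<close> by (intro prime_power_abundancy_le) simp
    also have "\<dots> \<le> real q / (real q - 1)"
      using \<open>2 \<le> q\<close> \<open>q \<le> p\<close> by (simp add: field_simps)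
    finally show ?thesis .
  qed
  then show ?thesis
    using ok \<open>2 \<le> q\<close> same_below_cutoff weight_bounds(1)[OF assms] theta_nonneg theta_le_1
    unfolding weighted_abundancy_def exponent_data_ok_def data
    by (intro classification_by_cutoff[where c = "real q / (real q - 1)" and K = "exponent_cutoff p"])
       (auto simp: weighted_abundancy_def)
qed

section \<open>Reduction to admissible exponents\<close>

lemma first_primes_39: "first_primes 39 = set (primes_upto 172)"
proof (intro set_eqI iffI)
  have card_primes: "card (set (primes_upto 172)) = 39"
    by (simp add: primes_upto_172)
  fix p
  {
    assume "p \<in> first_primes 39"
    then have "prime p" and card_less: "card {q. prime q \<and> q < p} < 39"
      by (auto simp: first_primes_def)
    show "p \<in> set (primes_upto 172)"
    proof (rule ccontr)
      assume "p \<notin> set (primes_upto 172)"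
      then have "set (primes_upto 172) \<subseteq> {q. prime q \<and> q < p}"
        using \<open>prime p\<close> by (auto simp: set_primes_upto)
      then have "39 \<le> card {q. prime q \<and> q < p}"
        using card_primes by (metis card_mono finite_Collect_conjI finite_Collect_less_nat)
      with card_less show False by simp
    qed
  next
    assume p: "p \<in> set (primes_upto 172)"
    then have "{q. prime q \<and> q < p} \<subseteq> set (primes_upto 172) - {p}"
      by (auto simp: set_primes_upto)
    then have "card {q. prime q \<and> q < p} \<le> 38"
      using card_mono[of "set (primes_upto 172) - {p}"] p card_primes by fastforce
    with p show "p \<in> first_primes 39"
      by (simp add: first_primes_def set_primes_upto)
  }
qed

lemma N39_root_le: "real N39 powr (1 / 757) \<le> 1.22226349"
proof -
  define P where "P = set (primes_upto 172)"
  have N39: "N39 = \<Prod>P" "0 < N39"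
    unfolding N39_def first_primes_39 P_def by (auto simp: set_primes_upto prime_gt_0_nat intro!: prod_pos)
  have "ln (real N39) = (\<Sum>p\<in>P. ln (real p))"
    unfolding N39(1) of_nat_prod by (rule ln_prod) (auto simp: P_def set_primes_upto prime_gt_0_nat)
  also have "\<dots> \<le> (\<Sum>p\<in>P. ln_hi p)"
    using ln_table_bounds exponent_table_in_ln_table
    by (intro sum_mono) (auto simp: P_def exponent_table_keys)
  also have "\<dots> = 151.9332752"
    unfolding P_def sum.distinct_set_conv_list[OF distinct_primes_upto] primes_upto_172
    by (simp only: ln_hi_def ln_table_def table_lookup_simps) simp
  finally have "real N39 powr (1 / 757) \<le> exp (151.9332752 / 757)"
    using N39(2) by (simp add: powr_def)
  also have "\<dots> \<le> (\<Sum>m<8. (151.9332752 / 757) ^ m / fact m) / (1 - (151.9332752 / 757) ^ 8 / fact 8)"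
    by (rule exp_le_partial_sum_div) (simp_all add: fact_numeral power_divide)
  also have "\<dots> \<le> 1.22226349"
    by (simp add: lessThan_nat_numeral fact_numeral power_divide)
  finally show ?thesis .
qed

lemma weighted_abundancy_bound_product:
  "theta * 1.22226349 * (\<Prod>p\<in>set (primes_upto 172). weighted_abundancy_bound p) \<le> 8.8272"
  unfolding prod.distinct_set_conv_list[OF distinct_primes_upto] primes_upto_172
  by (simp only: weighted_abundancy_bound_def exponent_data_def exponent_table_def table_lookup_simps)
     (simp add: theta_def)

lemma prime_factorization_superset:
  fixes n :: nat
  assumes "0 < n" "finite R" "prime_factors n \<subseteq> R" "\<And>p. p \<in> R \<Longrightarrow> prime p"
  shows "n = (\<Prod>p\<in>R. p ^ multiplicity p n)"
proof -
  have "multiplicity p n = 0" if "p \<in> R - prime_factors n" for p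
  proof (rule not_dvd_imp_multiplicity_0)
    show "\<not> p dvd n"
    proof
      assume "p dvd n"
      then have "p \<in> prime_factors n"
        using that assms(1,4) by (intro prime_factorsI) auto
      with that show False
        by simp
    qed
  qed
  then have "(\<Prod>p\<in>prime_factors n. p ^ multiplicity p n) = (\<Prod>p\<in>R. p ^ multiplicity p n)"
    using assms(2,3) by (intro prod.mono_neutral_left) auto
  then show ?thesis
    using prime_factorization_nat[OF assms(1)] by simp
qed

lemma weight_product_le:
  assumes "0 < n" "n < N39" "finite R" "prime_factors n \<subseteq> R" "\<And>p. p \<in> R \<Longrightarrow> prime p"
  shows "(\<Prod>p\<in>R. weight p ^ multiplicity p n) \<le> 1.22226349"
proof -
  have "(\<Prod>p\<in>R. weight p ^ multiplicity p n) \<le> (\<Prod>p\<in>R. real p ^ multiplicity p n) powr (1 / 757)"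
    using assms(5) weight_pos weight_bounds(2) prime_gt_0_nat
    by (intro prod_power_le_powr) (simp_all add: less_imp_le)
  also have "\<dots> = real n powr (1 / 757)"
    using arg_cong[OF prime_factorization_superset[OF assms(1,3,4,5)], of real] by simp
  also have "\<dots> \<le> real N39 powr (1 / 757)"
    using assms(2) by (intro powr_mono2) simp_all
  also have "\<dots> \<le> 1.22226349"
    by (rule N39_root_le)
  finally show ?thesis .
qed

lemma weighted_abundancy_product_gt:
  assumes "0 < n" "n < N39" "8.8272 < real (divisor_sigma n) / real n"
    and "finite R" "prime_factors n \<union> set (primes_upto 172) \<subseteq> R" "\<And>p. p \<in> R \<Longrightarrow> prime p"
  shows "theta * (\<Prod>p\<in>R. weighted_abundancy_bound p) < (\<Prod>p\<in>R. weighted_abundancy p (multiplicity p n))"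
proof -
  define W where "W = (\<Prod>p\<in>R. weight p ^ multiplicity p n)"
  have n_eq: "n = (\<Prod>p\<in>R. p ^ multiplicity p n)"
    using prime_factorization_superset[OF assms(1,4) _ assms(6)] assms(5) by blast
  have "W \<le> 1.22226349" "0 < W"
    using weight_product_le[OF assms(1,2,4) _ assms(6)] assms(5) weight_pos assms(6)
    by (auto simp: W_def intro: prod_pos)
  have "weighted_abundancy_bound p = 1" if "p \<in> R - set (primes_upto 172)" for p
  proof -
    have "173 \<le> p"
      using that assms(6) by (auto simp: set_primes_upto)
    then show ?thesis
      by (simp add: weighted_abundancy_bound_def exponent_data_large)
  qed
  then have "(\<Prod>p\<in>R. weighted_abundancy_bound p) = (\<Prod>p\<in>set (primes_upto 172). weighted_abundancy_bound p)"
    using assms(4,5) by (intro prod.mono_neutral_right) auto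
  then have "theta * (\<Prod>p\<in>R. weighted_abundancy_bound p) \<le> 8.8272 / 1.22226349"
    using weighted_abundancy_bound_product by (simp add: field_simps)
  also have "\<dots> < real (divisor_sigma n) / real n / 1.22226349"
    using assms(3) by (simp add: divide_strict_right_mono)
  also have "\<dots> \<le> real (divisor_sigma n) / real n / W"
    using \<open>W \<le> 1.22226349\<close> \<open>0 < W\<close> assms(3) by (intro divide_left_mono) simp_all
  also have "\<dots> = (\<Prod>p\<in>R. weighted_abundancy p (multiplicity p n))"
    using abundancy_prod_prime_powers[OF assms(4,6), of "\<lambda>p. multiplicity p n", folded n_eq]
    by (simp add: W_def weighted_abundancy_def prod_dividef)
  finally show ?thesis .
qed

lemma multiplicities_admissible:
  assumes "0 < n" "n < N39" "8.8272 < real (divisor_sigma n) / real n" "prime p"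
  shows "multiplicity p n \<in> admissible_exponents p"
proof (cases "p \<in> prime_factors n \<union> set (primes_upto 172)")
  case True
  define R where "R = prime_factors n \<union> set (primes_upto 172)"
  have "finite R" and primes: "\<And>q. q \<in> R \<Longrightarrow> prime q"
    by (auto simp: R_def set_primes_upto)
  have "0 \<le> weighted_abundancy q (multiplicity q n) \<and>
        weighted_abundancy q (multiplicity q n) \<le> weighted_abundancy_bound q" if "q \<in> R" for q
    using weighted_abundancy_pos[OF primes[OF that]] weighted_abundancy_classified[OF primes[OF that]]
    by (simp add: less_imp_le)
  from factor_gt_if_prod_gt[OF \<open>finite R\<close> this theta_nonneg
      weighted_abundancy_product_gt[OF assms(1-3) \<open>finite R\<close> _ primes]]
  have "theta * weighted_abundancy_bound p < weighted_abundancy p (multiplicity p n)"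
    using True by (simp add: R_def)
  then show ?thesis
    using weighted_abundancy_classified[OF assms(4)] by blast
next
  case False
  have "\<not> p dvd n"
  proof
    assume "p dvd n"
    then have "p \<in> prime_factors n"
      using assms(1,4) by (intro prime_factorsI) auto
    with False show False
      by simp
  qed
  moreover have "172 < p"
    using False assms(4) by (auto simp: set_primes_upto)
  ultimately show ?thesis
    by (simp add: not_dvd_imp_multiplicity_0 admissible_exponents_def exponent_data_large)
qed

lemma prime_factorization_below_173:
  assumes "0 < n" "\<And>p. prime p \<Longrightarrow> multiplicity p n \<in> admissible_exponents p"
  shows "n = (\<Prod>p\<in>set (primes_upto 172). p ^ multiplicity p n)"
proof (rule prime_factorization_superset[OF assms(1)])
  show "prime_factors n \<subseteq> set (primes_upto 172)"
  proof
    fix p assume "p \<in> prime_factors n"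
    then have "prime p" "0 < multiplicity p n"
      using assms(1) by (auto simp: prime_factors_multiplicity)
    moreover have "p \<le> 172"
    proof (rule ccontr)
      assume "\<not> p \<le> 172"
      then have "admissible_exponents p = {0}"
        by (simp add: admissible_exponents_def exponent_data_large)
      with assms(2)[OF \<open>prime p\<close>] \<open>0 < multiplicity p n\<close> show False
        by simp
    qed
    ultimately show "p \<in> set (primes_upto 172)"
      by (simp add: set_primes_upto)
  qed
qed (auto simp: set_primes_upto)

section \<open>The remaining candidates\<close>

definition fixed_primes :: "nat list" where
  "fixed_primes = [5, 11, 13, 19, 23, 29, 31, 37, 41, 43, 47, 53, 59, 61, 67, 71, 73, 79, 83, 89, 97,
                   101, 103, 107, 109, 113, 127, 131, 137, 139, 163, 167]"

definition fixed_exponent :: "nat \<Rightarrow> nat" where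
  "fixed_exponent p = (if p = 5 then 3 else if p \<in> {11, 13} then 2 else if p \<in> {163, 167} then 0 else 1)"

definition fixed_part :: nat where
  "fixed_part = (\<Prod>p\<in>set fixed_primes. p ^ fixed_exponent p)"

definition fixed_abundancy :: real where
  "fixed_abundancy = (\<Prod>p\<in>set fixed_primes. prime_power_abundancy p (fixed_exponent p))"

lemma distinct_fixed_primes: "distinct fixed_primes"
  by (simp add: fixed_primes_def)

lemma admissible_exponents_fixed:
  "\<forall>p\<in>set fixed_primes. admissible_exponents p = {fixed_exponent p}"
  unfolding fixed_primes_def list.set ball_simps
  by (simp only: admissible_exponents_def exponent_data_def exponent_table_def table_lookup_simps)
     (simp add: fixed_exponent_def)

lemma prod_primes_upto_172_split:
  "(\<Prod>p\<in>set (primes_upto 172). g p) =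
     (\<Prod>p\<in>set fixed_primes. g p) * (g 2 * g 3 * g 7 * g 17 * g 149 * g 151 * g 157)"
proof -
  have primes: "set (primes_upto 172) = set fixed_primes \<union> {2, 3, 7, 17, 149, 151, 157}"
    by (auto simp: primes_upto_172 fixed_primes_def)
  have "(\<Prod>p\<in>set (primes_upto 172). g p) =
      (\<Prod>p\<in>set fixed_primes. g p) * (\<Prod>p\<in>{2, 3, 7, 17, 149, 151, 157}. g p)"
    unfolding primes by (rule prod.union_disjoint) (simp_all add: fixed_primes_def)
  then show ?thesis
    by (simp add: mult.assoc)
qed

lemma fixed_part_eq: "fixed_part = 50143363831781658951464297542925120035132557962453148875"
  unfolding fixed_part_def prod.distinct_set_conv_list[OF distinct_fixed_primes]
  by (simp add: fixed_primes_def fixed_exponent_def)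

lemma fixed_abundancy_eq:
  "fixed_abundancy = 1526522940573799635473218528334284062720000 / 641588671628541469932857836956346815954821"
  unfolding fixed_abundancy_def prod.distinct_set_conv_list[OF distinct_fixed_primes]
  by (simp add: fixed_primes_def fixed_exponent_def prime_power_abundancy_numeral prime_power_abundancy_Suc)

lemma prod_primes_between:
  assumes "b \<le> 172"
  shows "(\<Prod>p\<in>{p. prime p \<and> a \<le> p \<and> p \<le> b}. p) = prod_list (filter (\<lambda>p. a \<le> p \<and> p \<le> b) (primes_upto 172))"
proof -
  have "{p. prime p \<and> a \<le> p \<and> p \<le> b} = set (filter (\<lambda>p. a \<le> p \<and> p \<le> b) (primes_upto 172))"
    using assms by (auto simp: set_primes_upto)
  then show ?thesis
    by (simp only: prod.distinct_set_conv_list[OF distinct_filter[OF distinct_primes_upto]] map_ident)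
qed

lemma SA425_eq: "SA425 = fixed_part * (2^9 * 3^5 * 7^2 * 17 * 149)"
  by (simp add: SA425_def prod_primes_between primes_upto_172 fixed_part_eq)

lemma J0_eq: "J0 = fixed_part * (2^9 * 3^5 * 7^2 * 17 * 151)"
  by (simp add: J0_def prod_primes_between primes_upto_172 fixed_part_eq)

lemma N39_eq: "N39 * (5^2 * 11 * 13) = fixed_part * (2 * 3 * 7 * 17 * 149 * 151 * 157 * 163 * 167)"
  unfolding N39_def first_primes_39 prod.distinct_set_conv_list[OF distinct_primes_upto]
  by (simp add: primes_upto_172 fixed_part_eq)

lemma varying_exponents:
  fixes e :: "nat \<Rightarrow> nat"
  defines "m \<equiv> (2::nat) ^ e 2 * 3 ^ e 3 * 7 ^ e 7 * 17 ^ e 17 * 149 ^ e 149 * 151 ^ e 151 * 157 ^ e 157"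
  assumes admissible: "\<forall>p\<in>{2, 3, 7, 17, 149, 151, 157}. e p \<in> admissible_exponents p"
    and lower: "2^9 * 3^5 * 7^2 * 17 * 149 < m"
    and upper: "m * (5^2 * 11 * 13) < 2 * 3 * 7 * 17 * 149 * 151 * 157 * 163 * 167"
    and abundant: "8.8272 < fixed_abundancy *
      (prime_power_abundancy 2 (e 2) * prime_power_abundancy 3 (e 3) * prime_power_abundancy 7 (e 7) *
       prime_power_abundancy 17 (e 17) * prime_power_abundancy 149 (e 149) *
       prime_power_abundancy 151 (e 151) * prime_power_abundancy 157 (e 157))"
  shows "m = 2^9 * 3^5 * 7^2 * 17 * 151"
proof -
  have "e 2 \<in> {8, 9, 10}" "e 3 \<in> {5, 6}" "e 7 \<in> {2, 3}" "e 17 \<in> {1, 2}"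
       "e 149 \<in> {0, 1}" "e 151 \<in> {0, 1}" "e 157 \<in> {0, 1}"
    using admissible
    by (simp_all only: ball_simps admissible_exponents_def exponent_data_def exponent_table_def
          table_lookup_simps) simp_all
  then show ?thesis
    using lower upper abundant unfolding m_def fixed_abundancy_eq
    apply (simp only: insert_iff empty_iff simp_thms)
    apply (elim disjE)
    apply (simp_all add: prime_power_abundancy_numeral prime_power_abundancy_Suc)
    done
qed

lemma fixed_varying_decomposition:
  assumes "\<forall>p\<in>set fixed_primes. e p = fixed_exponent p"
  defines "n \<equiv> \<Prod>p\<in>set (primes_upto 172). p ^ e p"
  shows "n = fixed_part * (2 ^ e 2 * 3 ^ e 3 * 7 ^ e 7 * 17 ^ e 17 * 149 ^ e 149 * 151 ^ e 151 * 157 ^ e 157)"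
    and "real (divisor_sigma n) / real n = fixed_abundancy *
      (prime_power_abundancy 2 (e 2) * prime_power_abundancy 3 (e 3) * prime_power_abundancy 7 (e 7) *
       prime_power_abundancy 17 (e 17) * prime_power_abundancy 149 (e 149) *
       prime_power_abundancy 151 (e 151) * prime_power_abundancy 157 (e 157))"
proof -
  show "n = fixed_part * (2 ^ e 2 * 3 ^ e 3 * 7 ^ e 7 * 17 ^ e 17 * 149 ^ e 149 * 151 ^ e 151 * 157 ^ e 157)"
    unfolding n_def prod_primes_upto_172_split fixed_part_def using assms(1) by simp
  have "real (divisor_sigma n) / real n = (\<Prod>p\<in>set (primes_upto 172). prime_power_abundancy p (e p))"
    unfolding n_def by (rule abundancy_prod_prime_powers) (auto simp: set_primes_upto)
  then show "real (divisor_sigma n) / real n = fixed_abundancy *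
      (prime_power_abundancy 2 (e 2) * prime_power_abundancy 3 (e 3) * prime_power_abundancy 7 (e 7) *
       prime_power_abundancy 17 (e 17) * prime_power_abundancy 149 (e 149) *
       prime_power_abundancy 151 (e 151) * prime_power_abundancy 157 (e 157))"
    unfolding prod_primes_upto_172_split fixed_abundancy_def using assms(1) by simp
qed

lemma admissible_number_eq_J0:
  assumes "\<forall>p\<in>set (primes_upto 172). e p \<in> admissible_exponents p"
    and n: "n = (\<Prod>p\<in>set (primes_upto 172). p ^ e p)"
    and "SA425 < n" "n < N39" "8.8272 < real (divisor_sigma n) / real n"
  shows "n = J0"
proof -
  have "set fixed_primes \<subseteq> set (primes_upto 172)" "{2, 3, 7, 17, 149, 151, 157} \<subseteq> set (primes_upto 172)"
    by (auto simp: primes_upto_172 fixed_primes_def)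
  then have fixed: "\<forall>p\<in>set fixed_primes. e p = fixed_exponent p"
    and varying: "\<forall>p\<in>{2, 3, 7, 17, 149, 151, 157}. e p \<in> admissible_exponents p"
    using assms(1) admissible_exponents_fixed by auto
  define m where "m = (2::nat) ^ e 2 * 3 ^ e 3 * 7 ^ e 7 * 17 ^ e 17 * 149 ^ e 149 * 151 ^ e 151 * 157 ^ e 157"
  note decomposition = fixed_varying_decomposition[OF fixed, folded n m_def]
  have "0 < fixed_part"
    by (simp add: fixed_part_eq)
  have lower: "fixed_part * (2^9 * 3^5 * 7^2 * 17 * 149) < fixed_part * m"
    using assms(3) decomposition(1) SA425_eq by simp
  have "fixed_part * (m * (5^2 * 11 * 13)) = n * (5^2 * 11 * 13)"
    using decomposition(1) by simp
  also have "\<dots> < N39 * (5^2 * 11 * 13)"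
    using assms(4) by simp
  also have "\<dots> = fixed_part * (2 * 3 * 7 * 17 * 149 * 151 * 157 * 163 * 167)"
    by (rule N39_eq)
  finally have upper: "fixed_part * (m * (5^2 * 11 * 13)) < fixed_part * (2 * 3 * 7 * 17 * 149 * 151 * 157 * 163 * 167)" .
  have "m = 2^9 * 3^5 * 7^2 * 17 * 151"
    using varying_exponents[of e, folded m_def, OF varying] lower upper assms(5) decomposition(2)
      \<open>0 < fixed_part\<close>
    by simp
  then show ?thesis
    using decomposition(1) J0_eq by simp
qed

lemma J0_properties: "SA425 < J0" "J0 < N39" "8.8272 < real (divisor_sigma J0) / real J0"
proof -
  define e where "e = fixed_exponent(2 := 9, 3 := 5, 7 := 2, 17 := 1, 149 := 0, 151 := 1, 157 := 0)"
  have "\<forall>p\<in>set fixed_primes. e p = fixed_exponent p"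
    by (simp add: e_def fixed_primes_def)
  note decomposition = fixed_varying_decomposition[OF this]
  have J0: "J0 = (\<Prod>p\<in>set (primes_upto 172). p ^ e p)"
    using decomposition(1) J0_eq by (simp add: e_def)
  show "SA425 < J0"
    using SA425_eq J0_eq by (simp add: fixed_part_eq)
  have "J0 * (5^2 * 11 * 13) < N39 * (5^2 * 11 * 13)"
    using J0_eq N39_eq by (simp add: fixed_part_eq)
  then show "J0 < N39"
    by simp
  show "8.8272 < real (divisor_sigma J0) / real J0"
    unfolding J0 decomposition(2)
    by (simp add: e_def fixed_abundancy_eq prime_power_abundancy_numeral prime_power_abundancy_Suc)
qed

theorem proposition5p3:
  fixes n :: nat
  shows "(SA425 < n \<and> n < N39 \<and> real (divisor_sigma n) / real n > 8.8272) \<longleftrightarrow> n = J0"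
proof
  assume H: "SA425 < n \<and> n < N39 \<and> real (divisor_sigma n) / real n > 8.8272"
  then have "0 < n"
    by auto
  have admissible: "multiplicity p n \<in> admissible_exponents p" if "prime p" for p
    using multiplicities_admissible[OF \<open>0 < n\<close> _ _ that] H by simp
  show "n = J0"
    using admissible_number_eq_J0[OF _ prime_factorization_below_173[OF \<open>0 < n\<close> admissible]] H admissible
    by (auto simp: set_primes_upto)
qed (use J0_properties in simp)

end
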